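(* Let $A$ be a nonempty set and let $\mathrm{FVL}(A)$ be as described in the context. Let $\mathcal N$ be the set of all lattice seminorms $\nu$ on $\mathrm{FVL}(A)$ such that $\nu(\delta_a)\le 1$ for every $a\in A$, and for $f\in\mathrm{FVL}(A)$ put $\|f\|=\sup_{\nu\in\mathcal N}\nu(f)$. Then: (i) $\|f\|<\infty$ for every $f\in\mathrm{FVL}(A)$, and $\|\cdot\|$ is a lattice norm on $\mathrm{FVL}(A)$ belonging to $\mathcal N$; consequently it is the greatest lattice seminorm $\nu$ on $\mathrm{FVL}(A)$ with $\nu(\delta_a)\le 1$ for all $a\in A$. (ii) Let $X$ be the completion of $(\mathrm{FVL}(A),\|\cdot\|)$ (a Banach lattice containing $A$ via $a\mapsto\delta_a$). Then $X$ is a free Banach lattice over $A$: for every Banach lattice $Y$ and every function $\varphi\colon A\to Y$ with $\sup_{a\in A}\|\varphi(a)\|\le 1$, there exists a unique lattice homomorphism $\tilde\varphi\colon X\to Y$ with $\tilde\varphi(\delta_a)=\varphi(a)$ for all $a\in A$ and $\|\tilde\varphi\|\le 1$. Hence $X$ is (lattice isometric, via an isometry fixing $A$, to) $\mathrm{FBL}(A)$.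
   Context: For a set $A$ and $a\in A$, let $\delta_a\colon\mathbb R^A\to\mathbb R$ be the evaluation map $\delta_a(x)=x(a)$. The space $\mathbb R^{\mathbb R^A}$ of all real functions on $\mathbb R^A$ is a vector lattice under pointwise operations and order. $\mathrm{FVL}(A)$ denotes the vector sublattice of $\mathbb R^{\mathbb R^A}$ generated by $\{\delta_a: a\in A\}$; $A$ is identified with $\{\delta_a\}$. (This is the free vector lattice over $A$: every map from $A$ to a vector lattice $Y$ extends uniquely to a lattice homomorphism $\mathrm{FVL}(A)\to Y$.) A lattice seminorm on a vector lattice $L$ is a seminorm $\nu$ such that $|f|\le|g|$ implies $\nu(f)\le\nu(g)$; a lattice norm is a lattice seminorm that is a norm. A Banach lattice $X$ containing a set $A$ is a free Banach lattice over $A$, denoted $\mathrm{FBL}(A)$ (unique up to lattice isometry fixing $A$), if every function $\varphi\colon A\to Y$ into a Banach lattice $Y$ with $\sup_{a\in A}\|\varphi(a)\|\le1$ extends uniquely to a lattice homomorphism $\tilde\varphi\colon X\to Y$ with $\|\tilde\varphi\|\le 1$. *)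

theory Defs
  imports "HOL-Analysis.Analysis"
begin

text \<open>The set A is modelled as the (nonempty) type 'a; R^A is 'a \<Rightarrow> real.\<close>

definition delta :: "'a \<Rightarrow> ('a \<Rightarrow> real) \<Rightarrow> real" where
  "delta a = (\<lambda>x. x a)"

inductive_set FVL :: "(('a \<Rightarrow> real) \<Rightarrow> real) set" where
  gen: "delta a \<in> FVL"
| zero: "(\<lambda>x. 0) \<in> FVL"
| add: "f \<in> FVL \<Longrightarrow> g \<in> FVL \<Longrightarrow> (\<lambda>x. f x + g x) \<in> FVL"
| scale: "f \<in> FVL \<Longrightarrow> (\<lambda>x. c * f x) \<in> FVL"
| sup: "f \<in> FVL \<Longrightarrow> g \<in> FVL \<Longrightarrow> (\<lambda>x. max (f x) (g x)) \<in> FVL"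
| inf: "f \<in> FVL \<Longrightarrow> g \<in> FVL \<Longrightarrow> (\<lambda>x. min (f x) (g x)) \<in> FVL"

text \<open>Lattice seminorms / norms on FVL(A) (only their values on FVL(A) matter).\<close>
definition lattice_seminorm_FVL :: "((('a \<Rightarrow> real) \<Rightarrow> real) \<Rightarrow> real) \<Rightarrow> bool" where
  "lattice_seminorm_FVL \<nu> \<longleftrightarrow>
     (\<forall>f\<in>FVL. \<forall>g\<in>FVL. \<nu> (\<lambda>x. f x + g x) \<le> \<nu> f + \<nu> g) \<and>
     (\<forall>f\<in>FVL. \<forall>c::real. \<nu> (\<lambda>x. c * f x) = \<bar>c\<bar> * \<nu> f) \<and>
     (\<forall>f\<in>FVL. \<forall>g\<in>FVL. (\<forall>x. \<bar>f x\<bar> \<le> \<bar>g x\<bar>) \<longrightarrow> \<nu> f \<le> \<nu> g)"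

definition lattice_norm_FVL :: "((('a \<Rightarrow> real) \<Rightarrow> real) \<Rightarrow> real) \<Rightarrow> bool" where
  "lattice_norm_FVL \<nu> \<longleftrightarrow> lattice_seminorm_FVL \<nu> \<and> (\<forall>f\<in>FVL. \<nu> f = 0 \<longrightarrow> f = (\<lambda>x. 0))"

definition NN :: "((('a \<Rightarrow> real) \<Rightarrow> real) \<Rightarrow> real) set" where
  "NN = {\<nu>. lattice_seminorm_FVL \<nu> \<and> (\<forall>a. \<nu> (delta a) \<le> 1)}"

definition fbl_norm :: "(('a \<Rightarrow> real) \<Rightarrow> real) \<Rightarrow> real" where
  "fbl_norm f = (SUP \<nu>\<in>NN. \<nu> f)"

class banach_lattice = banach + lattice +
  assumes bl_add_mono: "x \<le> y \<Longrightarrow> x + z \<le> y + z"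
    and bl_scaleR_mono: "x \<le> y \<Longrightarrow> 0 \<le> c \<Longrightarrow> c *\<^sub>R x \<le> c *\<^sub>R y"
    and bl_norm_mono: "sup x (- x) \<le> sup y (- y) \<Longrightarrow> norm x \<le> norm y"

definition lattice_hom :: "('x::banach_lattice \<Rightarrow> 'y::banach_lattice) \<Rightarrow> bool" where
  "lattice_hom T \<longleftrightarrow> linear T \<and> (\<forall>x y. T (sup x y) = sup (T x) (T y))"

text \<open>j : FVL(A) \<rightarrow> X exhibits the Banach lattice X as a completion of (FVL(A), fbl_norm):
  a linear lattice isometric embedding with dense range.\<close>
definition is_completion_map :: "((('a \<Rightarrow> real) \<Rightarrow> real) \<Rightarrow> 'x::banach_lattice) \<Rightarrow> bool" where
  "is_completion_map j \<longleftrightarrow>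
     (\<forall>f\<in>FVL. \<forall>g\<in>FVL. j (\<lambda>x. f x + g x) = j f + j g) \<and>
     (\<forall>f\<in>FVL. \<forall>c. j (\<lambda>x. c * f x) = c *\<^sub>R j f) \<and>
     (\<forall>f\<in>FVL. \<forall>g\<in>FVL. j (\<lambda>x. max (f x) (g x)) = sup (j f) (j g)) \<and>
     (\<forall>f\<in>FVL. norm (j f) = fbl_norm f) \<and>
     closure (j ` FVL) = UNIV"

end

theory Submission
  imports Defs "HOL-Library.Lattice_Algebras"
begin

text \<open>
  Every element of FVL(A) is the function \<open>x \<mapsto> t(x)\<close> of a lattice term \<open>t\<close> over \<open>A\<close>. Part (i)
  follows by induction on terms: admissible seminorms are bounded on each term, their supremum is
  again admissible, and it is a norm because evaluation at a point of the unit cube is admissible.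

  Part (ii) rests on a transfer principle: an identity between lattice terms that holds in \<open>\<real>\<close>
  holds in every Banach lattice \<open>Y\<close>. If it failed at \<open>\<phi> : A \<rightarrow> Y\<close>, take a prime ideal \<open>P\<close> avoiding
  the failure. Modulo \<open>P\<close> the order is total, so every supremum in the term can be resolved into
  one of its arguments, which reduces the term to a linear form; the finitely many signs consulted
  along the way form a pattern that some point \<open>x \<in> \<real>\<^sup>A\<close> realises, and at \<open>x\<close> the identity fails
  too. Hence \<open>\<delta>\<^sub>a \<mapsto> \<phi> a\<close> induces a well-defined lattice homomorphism on FVL(A); its norm is an
  admissible seminorm, so it is contractive and extends uniquely to the completion by density.
\<close>

section \<open>Banach lattices as ordered vector spaces\<close>

subclass (in banach_lattice) lattice_ab_group_add
proof
  show "a \<le> b \<Longrightarrow> c + a \<le> c + b" for a b c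
    using bl_add_mono[of a b c] by (simp add: add.commute)
qed

lemma bl_scaleR_right_mono:
  fixes x :: "'a::banach_lattice"
  assumes "a \<le> b" "0 \<le> x"
  shows "a *\<^sub>R x \<le> b *\<^sub>R x"
proof -
  have "(b - a) *\<^sub>R 0 \<le> (b - a) *\<^sub>R x" using assms by (intro bl_scaleR_mono) auto
  then show ?thesis by (simp add: scaleR_diff_left)
qed

text \<open>\<open>\<real>\<close> is itself a Banach lattice, so evaluating terms at real points is a special case of
  evaluating them in a Banach lattice.\<close>
instance real :: banach_lattice
  by standard (simp_all add: mult_left_mono sup_max, linarith)

definition lat_abs :: "'a::banach_lattice \<Rightarrow> 'a" where
  "lat_abs x = sup x (- x)"

lemma lat_abs_ge: "x \<le> lat_abs x" "- x \<le> lat_abs x"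
  by (simp_all add: lat_abs_def)

lemma lat_abs_nonneg: "0 \<le> lat_abs x"
proof -
  have "x + - x \<le> lat_abs x + lat_abs x" by (rule add_mono[OF lat_abs_ge])
  then show ?thesis by simp
qed

lemma lat_abs_of_nonneg: "0 \<le> x \<Longrightarrow> lat_abs x = x"
  by (simp add: lat_abs_def sup_absorb1 order_trans[of "- x" 0 x])

lemma lat_abs_lat_abs [simp]: "lat_abs (lat_abs x) = lat_abs x"
  by (simp add: lat_abs_of_nonneg lat_abs_nonneg)

lemma lat_abs_minus: "lat_abs (- x) = lat_abs x"
  by (simp add: lat_abs_def sup_commute)

lemma lat_abs_prts: "lat_abs x = pprt x - nprt x"
proof -
  have "pprt x - nprt x = sup (x + sup (- x) 0) (sup (- x) 0)"
    by (simp add: pprt_def nprt_def neg_inf_eq_sup add_sup_distrib_right)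
  also have "\<dots> = sup (lat_abs x) 0"
    by (simp add: add_sup_distrib_left lat_abs_def sup_aci)
  finally show ?thesis by (simp only: sup_absorb1[OF lat_abs_nonneg])
qed

lemma inf_pprt_nprt: "inf (pprt x) (- nprt x) = (0::'a::banach_lattice)"
proof -
  have "sup (pprt x) (- nprt x) = sup (lat_abs x) 0"
    by (simp add: pprt_def nprt_def neg_inf_eq_sup lat_abs_def sup_aci)
  then have "sup (pprt x) (- nprt x) = lat_abs x"
    by (simp only: sup_absorb1[OF lat_abs_nonneg])
  then show ?thesis
    using add_eq_inf_sup[of "pprt x" "- nprt x"] by (simp add: lat_abs_prts)
qed

lemma lat_abs_triangle: "lat_abs (x + y) \<le> lat_abs x + lat_abs y"
  using add_mono[OF lat_abs_ge(1)[of x] lat_abs_ge(1)[of y]]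
    add_mono[OF lat_abs_ge(2)[of x] lat_abs_ge(2)[of y]]
  by (simp add: lat_abs_def)

lemma scaleR_sup:
  fixes x y :: "'a::banach_lattice"
  shows "0 \<le> c \<Longrightarrow> c *\<^sub>R sup x y = sup (c *\<^sub>R x) (c *\<^sub>R y)"
proof (cases "c = 0")
  case False
  assume "0 \<le> c"
  with False have c: "0 < c" by simp
  let ?s = "sup (c *\<^sub>R x) (c *\<^sub>R y)"
  have "z \<le> inverse c *\<^sub>R ?s" if "c *\<^sub>R z \<le> ?s" for z
    using bl_scaleR_mono[OF that, of "inverse c"] c by simp
  then have "sup x y \<le> inverse c *\<^sub>R ?s" by simp
  then have "c *\<^sub>R sup x y \<le> ?s"
    using bl_scaleR_mono[of "sup x y" "inverse c *\<^sub>R ?s" c] c by simp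
  moreover have "?s \<le> c *\<^sub>R sup x y" using c by (simp add: bl_scaleR_mono)
  ultimately show ?thesis by (rule antisym)
qed simp

lemma scaleR_inf:
  fixes x y :: "'a::banach_lattice"
  assumes "0 \<le> c"
  shows "c *\<^sub>R inf x y = inf (c *\<^sub>R x) (c *\<^sub>R y)"
proof -
  have "c *\<^sub>R sup (- x) (- y) = sup (- (c *\<^sub>R x)) (- (c *\<^sub>R y))"
    by (simp only: scaleR_sup[OF assms] scaleR_minus_right)
  then show ?thesis
    by (simp only: inf_eq_neg_sup[of x] inf_eq_neg_sup[of "c *\<^sub>R x"] scaleR_minus_right)
qed

lemma lat_abs_scaleR: "lat_abs (c *\<^sub>R x) = \<bar>c\<bar> *\<^sub>R lat_abs x"
proof -
  have nonneg: "lat_abs (d *\<^sub>R z) = d *\<^sub>R lat_abs z" if "0 \<le> d" for d and z :: 'a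
    by (simp only: lat_abs_def scaleR_sup[OF that] scaleR_minus_right)
  show ?thesis
  proof (cases "0 \<le> c")
    case False
    then have "lat_abs (c *\<^sub>R x) = lat_abs ((- c) *\<^sub>R (- x))" by simp
    with False show ?thesis by (simp only: nonneg lat_abs_minus abs_of_neg)
  qed (simp add: nonneg)
qed

lemma lat_abs_diff_commute: "lat_abs (a - b) = lat_abs (b - a)"
  by (metis lat_abs_minus minus_diff_eq)

lemma birkhoff_inequality:
  "lat_abs (sup a b - sup a' b') \<le> lat_abs (a - a') + lat_abs (b - b')"
proof -
  have half: "sup a b - sup a' b' \<le> lat_abs (a - a') + lat_abs (b - b')" for a b a' b'
  proof -
    let ?d = "lat_abs (a - a') + lat_abs (b - b')"
    have "a - a' \<le> ?d" by (rule add_increasing2[OF lat_abs_nonneg lat_abs_ge(1)])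
    from add_mono[OF this sup_ge1[of a' b']] have a: "a \<le> ?d + sup a' b'" by simp
    have "b - b' \<le> ?d" by (rule add_increasing[OF lat_abs_nonneg lat_abs_ge(1)])
    from add_mono[OF this sup_ge2[of b' a']] have b: "b \<le> ?d + sup a' b'" by simp
    from sup_least[OF a b] show ?thesis by (simp only: diff_le_eq)
  qed
  have "- (sup a b - sup a' b') \<le> lat_abs (a - a') + lat_abs (b - b')"
    using half[of a' b' a b]
    unfolding minus_diff_eq lat_abs_diff_commute[of a' a] lat_abs_diff_commute[of b' b] .
  with half[of a b a' b'] show ?thesis by (simp add: lat_abs_def)
qed

lemma norm_le_if_lat_abs_le: "lat_abs x \<le> lat_abs y \<Longrightarrow> norm x \<le> norm y"
  by (simp add: lat_abs_def bl_norm_mono)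

lemma norm_lat_abs [simp]: "norm (lat_abs x) = norm x"
  by (metis antisym lat_abs_lat_abs norm_le_if_lat_abs_le order_refl)

lemma norm_sup_diff_le:
  fixes a b :: "'a::banach_lattice"
  shows "norm (sup a b - sup a' b') \<le> norm (a - a') + norm (b - b')"
proof -
  have "norm (sup a b - sup a' b') \<le> norm (lat_abs (a - a') + lat_abs (b - b'))"
    using birkhoff_inequality
    by (intro norm_le_if_lat_abs_le) (simp add: lat_abs_of_nonneg add_nonneg_nonneg lat_abs_nonneg)
  also have "\<dots> \<le> norm (a - a') + norm (b - b')"
    using norm_triangle_ineq[of "lat_abs (a - a')" "lat_abs (b - b')"] by simp
  finally show ?thesis .
qed

lemma tendsto_sup [tendsto_intros]:
  fixes f g :: "'b \<Rightarrow> 'y::banach_lattice"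
  assumes "(f \<longlongrightarrow> a) F" "(g \<longlongrightarrow> b) F"
  shows "((\<lambda>x. sup (f x) (g x)) \<longlongrightarrow> sup a b) F"
proof -
  have "((\<lambda>x. sup (f x) (g x) - sup a b) \<longlongrightarrow> 0) F"
  proof (rule Lim_null_comparison)
    show "\<forall>\<^sub>F x in F. norm (sup (f x) (g x) - sup a b) \<le> norm (f x - a) + norm (g x - b)"
      by (intro always_eventually allI norm_sup_diff_le)
    show "((\<lambda>x. norm (f x - a) + norm (g x - b)) \<longlongrightarrow> 0) F"
      by (intro tendsto_add_zero tendsto_norm_zero LIM_zero assms)
  qed
  then show ?thesis by (rule LIM_zero_cancel)
qed

lemma continuous_on_sup [continuous_intros]:
  fixes f g :: "'b::topological_space \<Rightarrow> 'y::banach_lattice"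
  shows "continuous_on S f \<Longrightarrow> continuous_on S g \<Longrightarrow> continuous_on S (\<lambda>x. sup (f x) (g x))"
  unfolding continuous_on_def by (blast intro: tendsto_sup)

section \<open>Ideals and prime ideals\<close>

locale lattice_ideal =
  fixes P :: "'a::banach_lattice set"
  assumes zero_mem: "0 \<in> P"
    and add_mem: "x \<in> P \<Longrightarrow> y \<in> P \<Longrightarrow> x + y \<in> P"
    and scaleR_mem: "x \<in> P \<Longrightarrow> c *\<^sub>R x \<in> P"
    and solid: "x \<in> P \<Longrightarrow> lat_abs y \<le> lat_abs x \<Longrightarrow> y \<in> P"
begin

lemma minus_mem: "x \<in> P \<Longrightarrow> - x \<in> P"
  using scaleR_mem[of x "- 1"] by simp

lemma lat_abs_mem_iff: "lat_abs x \<in> P \<longleftrightarrow> x \<in> P"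
  using solid[of x "lat_abs x"] solid[of "lat_abs x" x] by auto

lemma mem_if_between: "x \<in> P \<Longrightarrow> 0 \<le> y \<Longrightarrow> y \<le> lat_abs x \<Longrightarrow> y \<in> P"
  using solid[of x y] by (simp add: lat_abs_of_nonneg)

lemma sup_diff_mem:
  assumes "a - a' \<in> P" "b - b' \<in> P"
  shows "sup a b - sup a' b' \<in> P"
proof (rule solid)
  show "lat_abs (a - a') + lat_abs (b - b') \<in> P"
    using assms by (simp add: add_mem lat_abs_mem_iff)
  show "lat_abs (sup a b - sup a' b') \<le> lat_abs (lat_abs (a - a') + lat_abs (b - b'))"
    using birkhoff_inequality by (simp add: lat_abs_of_nonneg lat_abs_nonneg)
qed

end

locale prime_lattice_ideal = lattice_ideal +
  assumes prime: "0 \<le> x \<Longrightarrow> 0 \<le> y \<Longrightarrow> inf x y = 0 \<Longrightarrow> x \<in> P \<or> y \<in> P"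

lemma lattice_ideal_zero: "lattice_ideal {0::'a::banach_lattice}"
proof
  show "y \<in> {0}" if "x \<in> {0}" "lat_abs y \<le> lat_abs x" for x y :: 'a
    using that antisym[OF _ lat_abs_nonneg, of y] by (simp add: lat_abs_def)
qed auto

lemma lattice_ideal_chain_Union:
  assumes "C \<noteq> {}" "\<And>P. P \<in> C \<Longrightarrow> lattice_ideal P" "chain_subset C"
  shows "lattice_ideal (\<Union>C)"
proof
  show "0 \<in> \<Union>C" using assms(1,2) lattice_ideal.zero_mem by blast
  show "x + y \<in> \<Union>C" if xy: "x \<in> \<Union>C" "y \<in> \<Union>C" for x y
  proof -
    obtain X Y where "X \<in> C" "Y \<in> C" "x \<in> X" "y \<in> Y" using xy by blast
    moreover have "X \<subseteq> Y \<or> Y \<subseteq> X" using assms(3) \<open>X \<in> C\<close> \<open>Y \<in> C\<close>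
      by (auto simp: chain_subset_def)
    ultimately show ?thesis using assms(2) lattice_ideal.add_mem by (metis UnionI subsetD)
  qed
  show "c *\<^sub>R x \<in> \<Union>C" if "x \<in> \<Union>C" for x c
    using that assms(2) lattice_ideal.scaleR_mem by blast
  show "y \<in> \<Union>C" if "x \<in> \<Union>C" "lat_abs y \<le> lat_abs x" for x y
    using that assms(2) lattice_ideal.solid by blast
qed

definition ideal_adjoin :: "'a::banach_lattice set \<Rightarrow> 'a \<Rightarrow> 'a set" where
  "ideal_adjoin P x = {z. \<exists>p\<in>P. \<exists>c\<ge>0. lat_abs z \<le> lat_abs p + c *\<^sub>R x}"

lemma (in lattice_ideal) lattice_ideal_adjoin: "lattice_ideal (ideal_adjoin P x)"
proof
  show "0 \<in> ideal_adjoin P x"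
    unfolding ideal_adjoin_def using zero_mem by (auto intro!: bexI[of _ 0] exI[of _ 0])
next
  fix z1 z2 assume "z1 \<in> ideal_adjoin P x" "z2 \<in> ideal_adjoin P x"
  then obtain p1 c1 p2 c2 where h: "p1 \<in> P" "0 \<le> c1" "lat_abs z1 \<le> lat_abs p1 + c1 *\<^sub>R x"
    "p2 \<in> P" "0 \<le> c2" "lat_abs z2 \<le> lat_abs p2 + c2 *\<^sub>R x"
    unfolding ideal_adjoin_def by blast
  let ?p = "lat_abs p1 + lat_abs p2"
  have "lat_abs (z1 + z2) \<le> (lat_abs p1 + c1 *\<^sub>R x) + (lat_abs p2 + c2 *\<^sub>R x)"
    using lat_abs_triangle[of z1 z2] add_mono[OF h(3,6)] by (rule order_trans)
  also have "\<dots> = lat_abs ?p + (c1 + c2) *\<^sub>R x"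
    by (simp add: lat_abs_of_nonneg lat_abs_nonneg scaleR_add_left algebra_simps)
  finally show "z1 + z2 \<in> ideal_adjoin P x"
    unfolding ideal_adjoin_def using h add_mem lat_abs_mem_iff
    by (auto intro!: bexI[of _ ?p] exI[of _ "c1 + c2"])
next
  fix z c assume "z \<in> ideal_adjoin P x"
  then obtain p c1 where h: "p \<in> P" "0 \<le> c1" "lat_abs z \<le> lat_abs p + c1 *\<^sub>R x"
    unfolding ideal_adjoin_def by blast
  have "lat_abs (c *\<^sub>R z) \<le> \<bar>c\<bar> *\<^sub>R (lat_abs p + c1 *\<^sub>R x)"
    using bl_scaleR_mono[OF h(3), of "\<bar>c\<bar>"] by (simp add: lat_abs_scaleR)
  also have "\<dots> = lat_abs (\<bar>c\<bar> *\<^sub>R p) + (\<bar>c\<bar> * c1) *\<^sub>R x"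
    by (simp add: lat_abs_scaleR scaleR_add_right)
  finally show "c *\<^sub>R z \<in> ideal_adjoin P x"
    unfolding ideal_adjoin_def using h scaleR_mem
    by (auto intro!: bexI[of _ "\<bar>c\<bar> *\<^sub>R p"] exI[of _ "\<bar>c\<bar> * c1"])
next
  fix z y assume "z \<in> ideal_adjoin P x" "lat_abs y \<le> lat_abs z"
  then show "y \<in> ideal_adjoin P x" unfolding ideal_adjoin_def using order_trans by blast
qed

lemma (in lattice_ideal) subset_ideal_adjoin: "P \<subseteq> ideal_adjoin P x"
  unfolding ideal_adjoin_def by (force intro: exI[of _ 0])

lemma (in lattice_ideal) mem_ideal_adjoin:
  assumes "0 \<le> x"
  shows "x \<in> ideal_adjoin P x"
proof -
  have "lat_abs x \<le> lat_abs 0 + 1 *\<^sub>R x" using assms by (simp add: lat_abs_of_nonneg)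
  then show ?thesis
    unfolding ideal_adjoin_def using zero_mem by (intro CollectI bexI[of _ 0] exI[of _ 1]) auto
qed

text \<open>An ideal maximal among those avoiding some element is prime: if neither of two disjoint
  positive elements lies in it, the element is dominated modulo the ideal by multiples of both,
  hence by a multiple of their infimum, which is zero.\<close>
lemma (in lattice_ideal) maximal_avoiding_imp_prime:
  assumes "w \<notin> P" and maximal: "\<And>Q. lattice_ideal Q \<Longrightarrow> w \<notin> Q \<Longrightarrow> P \<subseteq> Q \<Longrightarrow> Q = P"
  shows "prime_lattice_ideal P"
proof
  fix x y :: 'a assume x: "0 \<le> x" and y: "0 \<le> y" and xy: "inf x y = 0"
  show "x \<in> P \<or> y \<in> P"
  proof (rule ccontr)
    assume "\<not> (x \<in> P \<or> y \<in> P)"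
    have adjoin: "w \<in> ideal_adjoin P z" if "0 \<le> z" "z \<notin> P" for z
      using maximal[OF lattice_ideal_adjoin _ subset_ideal_adjoin] mem_ideal_adjoin[OF that(1)]
        that(2) by blast
    obtain p1 c1 where "p1 \<in> P" "0 \<le> c1" "lat_abs w \<le> lat_abs p1 + c1 *\<^sub>R x"
      using adjoin[OF x] \<open>\<not> (x \<in> P \<or> y \<in> P)\<close> unfolding ideal_adjoin_def by blast
    moreover obtain p2 c2 where "p2 \<in> P" "0 \<le> c2" "lat_abs w \<le> lat_abs p2 + c2 *\<^sub>R y"
      using adjoin[OF y] \<open>\<not> (x \<in> P \<or> y \<in> P)\<close> unfolding ideal_adjoin_def by blast
    ultimately have h: "p1 \<in> P" "0 \<le> c1" "lat_abs w \<le> lat_abs p1 + c1 *\<^sub>R x"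
      "p2 \<in> P" "0 \<le> c2" "lat_abs w \<le> lat_abs p2 + c2 *\<^sub>R y" by blast+
    define c where "c = max c1 c2"
    have "0 \<le> c" using h(2) by (simp add: c_def)
    define d where "d = lat_abs p1 + lat_abs p2"
    have "lat_abs p1 \<le> d" "lat_abs p2 \<le> d"
      unfolding d_def by (simp_all add: add_increasing add_increasing2 lat_abs_nonneg)
    have "c1 *\<^sub>R x \<le> c *\<^sub>R x" "c2 *\<^sub>R y \<le> c *\<^sub>R y"
      by (simp_all add: bl_scaleR_right_mono x y c_def)
    then have "lat_abs w \<le> d + c *\<^sub>R x" "lat_abs w \<le> d + c *\<^sub>R y"
      using h(3,6) \<open>lat_abs p1 \<le> d\<close> \<open>lat_abs p2 \<le> d\<close>
      by (meson add_mono order_trans)+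
    then have "lat_abs w \<le> inf (d + c *\<^sub>R x) (d + c *\<^sub>R y)" by simp
    also have "\<dots> = d"
      by (simp only: add_inf_distrib_left[symmetric] scaleR_inf[OF \<open>0 \<le> c\<close>, symmetric] xy
          scaleR_zero_right add_0_right)
    finally have "lat_abs w \<le> lat_abs d"
      unfolding d_def by (simp add: lat_abs_of_nonneg add_nonneg_nonneg lat_abs_nonneg)
    moreover have "d \<in> P" using h(1,4) by (simp add: d_def add_mem lat_abs_mem_iff)
    ultimately have "w \<in> P" by (rule solid[rotated])
    with \<open>w \<notin> P\<close> show False by simp
  qed
qed

lemma exists_prime_ideal_avoiding:
  fixes w :: "'a::banach_lattice"
  assumes "w \<noteq> 0"
  shows "\<exists>P. prime_lattice_ideal P \<and> w \<notin> P"
proof -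
  let ?A = "{P. lattice_ideal P \<and> w \<notin> P}"
  have "\<exists>U\<in>?A. \<forall>X\<in>C. X \<subseteq> U" if "C \<in> chains ?A" for C
  proof (cases "C = {}")
    case True
    then show ?thesis using lattice_ideal_zero assms by auto
  next
    case False
    have "C \<subseteq> ?A" "chain_subset C" using that by (simp_all add: chains_def)
    then have "lattice_ideal (\<Union>C)" "w \<notin> \<Union>C"
      using lattice_ideal_chain_Union[OF False] by auto
    then show ?thesis by blast
  qed
  then obtain P where P: "lattice_ideal P" "w \<notin> P"
    and maximal: "\<And>Q. Q \<in> ?A \<Longrightarrow> P \<subseteq> Q \<Longrightarrow> Q = P"
    using Zorn_Lemma2[of ?A] by force
  have "prime_lattice_ideal P"
    using lattice_ideal.maximal_avoiding_imp_prime[OF P] maximal by simp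
  with P(2) show ?thesis by blast
qed

text \<open>\<open>nonneg_mod P y\<close> says that \<open>y \<ge> 0\<close> in the quotient by \<open>P\<close>.\<close>
definition nonneg_mod :: "'a::banach_lattice set \<Rightarrow> 'a \<Rightarrow> bool" where
  "nonneg_mod P y \<longleftrightarrow> nprt y \<in> P"

context lattice_ideal
begin

lemma nonneg_mod_add:
  assumes "nonneg_mod P a" "nonneg_mod P b"
  shows "nonneg_mod P (a + b)"
proof -
  have "nprt a \<le> a" "nprt b \<le> b" unfolding nprt_def by (rule inf_le1)+
  then have "nprt a + nprt b \<le> a + b" by (rule add_mono)
  moreover have "nprt a + nprt b \<le> 0" by (rule add_nonpos_nonpos[OF nprt_le_zero nprt_le_zero])
  ultimately have "nprt a + nprt b \<le> nprt (a + b)" unfolding nprt_def[of "a + b"] by (rule le_infI)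
  then have "- nprt (a + b) \<le> - (nprt a + nprt b)" by (simp only: neg_le_iff_le)
  also have "\<dots> \<le> lat_abs (nprt a + nprt b)" by (rule lat_abs_ge(2))
  finally have le: "- nprt (a + b) \<le> lat_abs (nprt a + nprt b)" .
  have mem: "nprt a + nprt b \<in> P" using assms unfolding nonneg_mod_def by (rule add_mem)
  have "0 \<le> - nprt (a + b)" by (simp only: neg_0_le_iff_le nprt_le_zero)
  from mem_if_between[OF mem this le] have "- (- nprt (a + b)) \<in> P" by (rule minus_mem)
  then show ?thesis unfolding nonneg_mod_def minus_minus .
qed

lemma nonneg_mod_scaleR:
  assumes "0 \<le> c" "nonneg_mod P a"
  shows "nonneg_mod P (c *\<^sub>R a)"
proof -
  have "nprt (c *\<^sub>R a) = c *\<^sub>R nprt a"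
    unfolding nprt_def scaleR_inf[OF assms(1)] scaleR_zero_right ..
  with assms(2) show ?thesis unfolding nonneg_mod_def by (simp only: scaleR_mem)
qed

lemma nonneg_mod_antisym:
  assumes "nonneg_mod P a" "nonneg_mod P (- a)"
  shows "a \<in> P"
proof -
  have "pprt a \<in> P" using assms(2) minus_mem[of "nprt (- a)"] by (simp add: nonneg_mod_def nprt_neg)
  with assms(1) have "pprt a + nprt a \<in> P" by (simp add: nonneg_mod_def add_mem)
  then show ?thesis by (simp only: prts[symmetric])
qed

lemma sup_minus_left_mem:
  assumes "nonneg_mod P (a - b)"
  shows "sup a b - a \<in> P"
proof -
  have "sup a b - a = sup (a - a) (b - a)" by (simp only: diff_conv_add_uminus add_sup_distrib_right)
  also have "\<dots> = pprt (b - a)" by (simp add: pprt_def sup_commute)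
  also have "\<dots> = - nprt (a - b)" using nprt_neg[of "b - a"] by simp
  finally show ?thesis using assms minus_mem by (simp add: nonneg_mod_def)
qed

end

lemma (in prime_lattice_ideal) nonneg_mod_total: "nonneg_mod P a \<or> nonneg_mod P (- a)"
proof -
  have "pprt a \<in> P \<or> - nprt a \<in> P"
    using prime[OF zero_le_pprt _ inf_pprt_nprt] by simp
  then show ?thesis
    using minus_mem[of "pprt a"] minus_mem[of "- nprt a"] by (auto simp: nonneg_mod_def nprt_neg)
qed

section \<open>Lattice terms and their linearisation modulo a prime ideal\<close>

datatype 'a lterm =
  LVar 'a | LAdd "'a lterm" "'a lterm" | LScale real "'a lterm" | LSup "'a lterm" "'a lterm"

primrec lterm_eval :: "('a \<Rightarrow> 'y::banach_lattice) \<Rightarrow> 'a lterm \<Rightarrow> 'y" where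
  "lterm_eval \<phi> (LVar a) = \<phi> a"
| "lterm_eval \<phi> (LAdd s t) = lterm_eval \<phi> s + lterm_eval \<phi> t"
| "lterm_eval \<phi> (LScale c s) = c *\<^sub>R lterm_eval \<phi> s"
| "lterm_eval \<phi> (LSup s t) = sup (lterm_eval \<phi> s) (lterm_eval \<phi> t)"

primrec lterm_vars :: "'a lterm \<Rightarrow> 'a set" where
  "lterm_vars (LVar a) = {a}"
| "lterm_vars (LAdd s t) = lterm_vars s \<union> lterm_vars t"
| "lterm_vars (LScale c s) = lterm_vars s"
| "lterm_vars (LSup s t) = lterm_vars s \<union> lterm_vars t"

lemma finite_lterm_vars [simp]: "finite (lterm_vars t)"
  by (induction t) simp_all

definition lincomb :: "'a set \<Rightarrow> ('a \<Rightarrow> 'y::real_vector) \<Rightarrow> ('a \<Rightarrow> real) \<Rightarrow> 'y" where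
  "lincomb S \<phi> l = (\<Sum>a\<in>S. l a *\<^sub>R \<phi> a)"

lemma lincomb_add: "lincomb S \<phi> (\<lambda>b. l b + m b) = lincomb S \<phi> l + lincomb S \<phi> m"
  by (simp add: lincomb_def scaleR_add_left sum.distrib)

lemma lincomb_diff: "lincomb S \<phi> (\<lambda>b. l b - m b) = lincomb S \<phi> l - lincomb S \<phi> m"
  by (simp add: lincomb_def scaleR_diff_left sum_subtractf)

lemma lincomb_scale: "lincomb S \<phi> (\<lambda>b. c * l b) = c *\<^sub>R lincomb S \<phi> l"
  by (simp add: lincomb_def scaleR_sum_right)

lemma lincomb_minus: "lincomb S \<phi> (\<lambda>b. - l b) = - lincomb S \<phi> l"
  using lincomb_scale[of S \<phi> "- 1" l] by simp

lemma lincomb_indicator: "finite S \<Longrightarrow> a \<in> S \<Longrightarrow> lincomb S \<phi> (\<lambda>b. if b = a then 1 else 0) = \<phi> a"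
  by (simp add: lincomb_def if_distrib[of "\<lambda>c. c *\<^sub>R _"] cong: if_cong)

lemma lincomb_cong: "(\<And>a. a \<in> S \<Longrightarrow> l a = l' a) \<Longrightarrow> lincomb S \<phi> l = lincomb S \<phi> l'"
  by (simp add: lincomb_def)

text \<open>Given a guess \<open>ps\<close> for the sign of every linear form that will be compared, a lattice term
  is replaced by a linear form by evaluating each supremum as the branch that \<open>ps\<close> declares
  larger; \<open>branch_forms\<close> collects the forms whose signs were consulted.\<close>
primrec linearise :: "(('a \<Rightarrow> real) \<Rightarrow> bool) \<Rightarrow> 'a lterm \<Rightarrow> 'a \<Rightarrow> real" where
  "linearise ps (LVar a) = (\<lambda>b. if b = a then 1 else 0)"
| "linearise ps (LAdd s t) = (\<lambda>b. linearise ps s b + linearise ps t b)"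
| "linearise ps (LScale c s) = (\<lambda>b. c * linearise ps s b)"
| "linearise ps (LSup s t) =
     (if ps (\<lambda>b. linearise ps s b - linearise ps t b) then linearise ps s else linearise ps t)"

primrec branch_forms :: "(('a \<Rightarrow> real) \<Rightarrow> bool) \<Rightarrow> 'a lterm \<Rightarrow> ('a \<Rightarrow> real) set" where
  "branch_forms ps (LVar a) = {}"
| "branch_forms ps (LAdd s t) = branch_forms ps s \<union> branch_forms ps t"
| "branch_forms ps (LScale c s) = branch_forms ps s"
| "branch_forms ps (LSup s t) =
     insert (\<lambda>b. linearise ps s b - linearise ps t b) (branch_forms ps s \<union> branch_forms ps t)"

lemma finite_branch_forms: "finite (branch_forms ps t)"
  by (induction t) simp_all

lemma linearise_outside_vars: "a \<notin> lterm_vars t \<Longrightarrow> linearise ps t a = 0"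
  by (induction t) simp_all

lemma branch_forms_outside_vars: "l \<in> branch_forms ps t \<Longrightarrow> a \<notin> lterm_vars t \<Longrightarrow> l a = 0"
  by (induction t) (auto simp: linearise_outside_vars)

lemma (in prime_lattice_ideal) lterm_eval_linearise_mod:
  assumes S: "finite S" "lterm_vars t \<subseteq> S"
    and ps: "\<forall>l\<in>branch_forms ps t. ps l \<longleftrightarrow> nonneg_mod P (lincomb S \<phi> l)"
  shows "lterm_eval \<phi> t - lincomb S \<phi> (linearise ps t) \<in> P"
  using S(2) ps
proof (induction t)
  case (LVar a)
  then show ?case using zero_mem by (simp add: lincomb_indicator S(1))
next
  case (LAdd s t)
  then have "(lterm_eval \<phi> s - lincomb S \<phi> (linearise ps s))
      + (lterm_eval \<phi> t - lincomb S \<phi> (linearise ps t)) \<in> P"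
    by (simp add: add_mem)
  then show ?case by (simp add: lincomb_add algebra_simps)
next
  case (LScale c s)
  then have "c *\<^sub>R (lterm_eval \<phi> s - lincomb S \<phi> (linearise ps s)) \<in> P"
    by (simp add: scaleR_mem)
  then show ?case by (simp add: lincomb_scale algebra_simps)
next
  case (LSup s t)
  define A B where "A = lterm_eval \<phi> s" and "B = lterm_eval \<phi> t"
  define LA LB where "LA = lincomb S \<phi> (linearise ps s)" and "LB = lincomb S \<phi> (linearise ps t)"
  have "A - LA \<in> P" "B - LB \<in> P" using LSup by (simp_all add: A_def B_def LA_def LB_def)
  then have sup_mem: "sup A B - sup LA LB \<in> P" by (rule sup_diff_mem)
  have sign: "ps (\<lambda>b. linearise ps s b - linearise ps t b) \<longleftrightarrow> nonneg_mod P (LA - LB)"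
    using LSup.prems(2) by (simp add: LA_def LB_def lincomb_diff)
  show ?case
  proof (cases "nonneg_mod P (LA - LB)")
    case True
    then have "(sup A B - sup LA LB) + (sup LA LB - LA) \<in> P"
      using sup_mem sup_minus_left_mem by (intro add_mem)
    then have "sup A B - LA \<in> P" by (simp only: diff_conv_add_uminus add.assoc minus_add_cancel)
    then show ?thesis using True sign by (simp add: A_def B_def LA_def)
  next
    case False
    then have "nonneg_mod P (LB - LA)" using nonneg_mod_total[of "LA - LB"] by simp
    then have "(sup A B - sup LA LB) + (sup LA LB - LB) \<in> P"
      using sup_mem sup_minus_left_mem[of LB LA] by (intro add_mem) (simp_all add: sup_commute)
    then have "sup A B - LB \<in> P" by (simp only: diff_conv_add_uminus add.assoc minus_add_cancel)
    then show ?thesis using False sign by (simp add: A_def B_def LB_def)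
  qed
qed

lemma prime_lattice_ideal_zero_real: "prime_lattice_ideal {0::real}"
proof (rule prime_lattice_ideal.intro[OF lattice_ideal_zero])
  show "prime_lattice_ideal_axioms {0::real}"
    by standard (auto simp: inf_min min_def split: if_splits)
qed

lemma lterm_eval_linearise_real:
  fixes x :: "'a \<Rightarrow> real"
  assumes "finite S" "lterm_vars t \<subseteq> S" "\<forall>l\<in>branch_forms ps t. ps l \<longleftrightarrow> 0 \<le> lincomb S x l"
  shows "lterm_eval x t = lincomb S x (linearise ps t)"
proof -
  have "nonneg_mod {0} r \<longleftrightarrow> 0 \<le> r" for r :: real
    by (simp add: nonneg_mod_def zero_le_iff_zero_nprt)
  then show ?thesis
    using prime_lattice_ideal.lterm_eval_linearise_mod[OF prime_lattice_ideal_zero_real assms(1,2)]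
      assms(3) by simp
qed

section \<open>Realising sign patterns of linear forms\<close>

lemma finite_real_sets_separated:
  fixes A B :: "real set"
  assumes "finite A" "finite B" "\<And>a b. a \<in> A \<Longrightarrow> b \<in> B \<Longrightarrow> a < b"
  shows "\<exists>t. (\<forall>a\<in>A. a < t) \<and> (\<forall>b\<in>B. t < b)"
proof (cases "A = {} \<or> B = {}")
  case True
  show ?thesis
  proof (cases "A = {}")
    case True
    have "Min (insert 0 B) \<le> b" if "b \<in> B" for b using assms(2) that by (intro Min_le) auto
    then have "\<forall>b\<in>B. Min (insert 0 B) - 1 < b" by fastforce
    then show ?thesis using True by blast
  next
    case False
    with \<open>A = {} \<or> B = {}\<close> have "B = {}" by simp
    have "a \<le> Max A" if "a \<in> A" for a using assms(1) that by simp
    then have "\<forall>a\<in>A. a < Max A + 1" by fastforce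
    with \<open>B = {}\<close> show ?thesis by blast
  qed
next
  case False
  then have "Max A < Min B" using assms by simp
  moreover have "a \<le> Max A" "Min B \<le> b" if "a \<in> A" "b \<in> B" for a b
    using assms(1,2) that by simp_all
  ultimately show ?thesis using False
    by (intro exI[of _ "(Max A + Min B) / 2"]) fastforce
qed

text \<open>A total preorder on \<open>R \<union> {e}\<close> that is already realised on \<open>R\<close> by the values \<open>v\<close> can be
  realised on all of \<open>R \<union> {e}\<close> by giving \<open>e\<close> a suitable value \<open>t\<close>; \<open>lower m\<close> and \<open>upper m\<close>
  stand for \<open>m \<preceq> e\<close> and \<open>e \<preceq> m\<close>.\<close>
lemma finite_cut_realisable:
  fixes v :: "'b \<Rightarrow> real" and lower upper :: "'b \<Rightarrow> bool"
  assumes "finite R"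
    and total: "\<And>m. m \<in> R \<Longrightarrow> lower m \<or> upper m"
    and lower_down: "\<And>m m'. m \<in> R \<Longrightarrow> m' \<in> R \<Longrightarrow> lower m \<Longrightarrow> v m' \<le> v m \<Longrightarrow> lower m'"
    and upper_up: "\<And>m m'. m \<in> R \<Longrightarrow> m' \<in> R \<Longrightarrow> upper m \<Longrightarrow> v m \<le> v m' \<Longrightarrow> upper m'"
    and lower_upper: "\<And>m m'. m \<in> R \<Longrightarrow> m' \<in> R \<Longrightarrow> lower m \<Longrightarrow> upper m' \<Longrightarrow> v m \<le> v m'"
  shows "\<exists>t. \<forall>m\<in>R. (lower m \<longleftrightarrow> v m \<le> t) \<and> (upper m \<longleftrightarrow> t \<le> v m)"
proof (cases "\<exists>m0\<in>R. lower m0 \<and> upper m0")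
  case True
  then obtain m0 where m0: "m0 \<in> R" "lower m0" "upper m0" by blast
  have "(lower m \<longleftrightarrow> v m \<le> v m0) \<and> (upper m \<longleftrightarrow> v m0 \<le> v m)" if m: "m \<in> R" for m
    using lower_down[OF m0(1) m m0(2)] upper_up[OF m0(1) m m0(3)]
      lower_upper[OF m m0(1) _ m0(3)] lower_upper[OF m0(1) m m0(2)] by blast
  then show ?thesis by blast
next
  case False
  let ?L = "v ` {m\<in>R. lower m}" and ?U = "v ` {m\<in>R. \<not> lower m}"
  have "v m < v m'" if "m \<in> R" "lower m" "m' \<in> R" "\<not> lower m'" for m m'
  proof -
    have "v m \<le> v m'" using lower_upper[OF that(1,3,2)] total[OF that(3)] that(4) by blast
    moreover have "v m \<noteq> v m'" using lower_down[OF that(1,3,2)] that(4) by force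
    ultimately show ?thesis by simp
  qed
  then have "a < b" if "a \<in> ?L" "b \<in> ?U" for a b using that by blast
  then obtain t where t: "\<forall>a\<in>?L. a < t" "\<forall>b\<in>?U. t < b"
    using finite_real_sets_separated[of ?L ?U] \<open>finite R\<close> by auto
  have "(lower m \<longleftrightarrow> v m \<le> t) \<and> (upper m \<longleftrightarrow> t \<le> v m)" if m: "m \<in> R" for m
  proof (cases "lower m")
    case True
    then have "v m < t" "\<not> upper m" using t(1) m False by auto
    then show ?thesis using True by simp
  next
    case False
    then have "t < v m" "upper m" using t(2) m total by auto
    then show ?thesis using False by simp
  qed
  then show ?thesis by blast
qed

locale total_cone =
  fixes C :: "('a \<Rightarrow> real) \<Rightarrow> bool"
  assumes add: "C l \<Longrightarrow> C m \<Longrightarrow> C (\<lambda>a. l a + m a)"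
    and scale: "0 \<le> c \<Longrightarrow> C l \<Longrightarrow> C (\<lambda>a. c * l a)"
    and total: "C l \<or> C (\<lambda>a. - l a)"
begin

lemma add_pointwise: "C l \<Longrightarrow> C m \<Longrightarrow> (\<And>a. k a = l a + m a) \<Longrightarrow> C k"
  using add[of l m] by (metis ext)

lemma total_pointwise: "\<not> C l \<Longrightarrow> (\<And>a. k a = - l a) \<Longrightarrow> C k"
  using total[of l] by (metis ext)

lemma zero: "C (\<lambda>a. 0)"
  using total_pointwise[of "\<lambda>a. 0" "\<lambda>a. 0"] by auto

lemma scale_iff:
  assumes "0 < c" "\<And>a. k a = c * l a"
  shows "C k \<longleftrightarrow> C l"
proof
  have "k = (\<lambda>a. c * l a)" using assms(2) by (rule ext)
  then show "C l \<Longrightarrow> C k" using scale[of c l] assms(1) by simp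
  have "l = (\<lambda>a. inverse c * k a)" using assms by (simp add: field_simps)
  then show "C k \<Longrightarrow> C l" using scale[of "inverse c" k] assms(1) by simp
qed

end

definition pivot_rest :: "'a \<Rightarrow> ('a \<Rightarrow> real) \<Rightarrow> 'a \<Rightarrow> real" where
  "pivot_rest b l = (\<lambda>a. if a = b then 0 else - l a / l b)"

definition pivoted :: "'a \<Rightarrow> ('a \<Rightarrow> real) set \<Rightarrow> ('a \<Rightarrow> real) set" where
  "pivoted b F = pivot_rest b ` {l\<in>F. l b \<noteq> 0}"

definition pivot_family :: "'a \<Rightarrow> ('a \<Rightarrow> real) set \<Rightarrow> ('a \<Rightarrow> real) set" where
  "pivot_family b F =
     {l\<in>F. l b = 0} \<union> {\<lambda>a. m a - m' a | m m'. m \<in> pivoted b F \<and> m' \<in> pivoted b F}"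

lemma pivot_family:
  assumes "finite F" "\<forall>l\<in>F. \<forall>a. a \<notin> insert b S \<longrightarrow> l a = 0"
  shows "finite (pivot_family b F)" "\<forall>l\<in>pivot_family b F. \<forall>a. a \<notin> S \<longrightarrow> l a = 0"
proof -
  let ?R = "pivoted b F"
  show "finite (pivot_family b F)"
    using assms(1) by (simp add: pivot_family_def pivoted_def finite_image_set2)
  have vanish_R: "m a = 0" if "m \<in> ?R" "a \<notin> S" for m a
  proof -
    obtain l where "l \<in> F" "m = pivot_rest b l" using \<open>m \<in> ?R\<close> unfolding pivoted_def by blast
    then show ?thesis using assms(2) \<open>a \<notin> S\<close> by (simp add: pivot_rest_def)
  qed
  have "l a = 0" if lG: "l \<in> pivot_family b F" and aS: "a \<notin> S" for l a
  proof -
    consider "l \<in> F" "l b = 0" | m m' where "m \<in> ?R" "m' \<in> ?R" "l = (\<lambda>a. m a - m' a)"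
      using lG unfolding pivot_family_def by auto
    then show ?thesis
    proof cases
      case 1
      then show ?thesis using assms(2) aS by (cases "a = b") simp_all
    qed (simp add: vanish_R aS)
  qed
  then show "\<forall>l\<in>pivot_family b F. \<forall>a. a \<notin> S \<longrightarrow> l a = 0" by blast
qed

context total_cone
begin

text \<open>A form with \<open>l b \<noteq> 0\<close> is a multiple of \<open>e\<^sub>b - pivot_rest b l\<close>, which no longer involves \<open>b\<close>.\<close>
lemma pivot_iff:
  assumes "l b \<noteq> 0"
  shows "C l \<longleftrightarrow> (if 0 < l b then C (\<lambda>a. (if a = b then 1 else 0) - pivot_rest b l a)
                    else C (\<lambda>a. pivot_rest b l a - (if a = b then 1 else 0)))"
proof (cases "0 < l b")
  case True
  have "l a = l b * ((if a = b then 1 else 0) - pivot_rest b l a)" for a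
    using assms by (simp add: pivot_rest_def)
  from scale_iff[OF True this] True show ?thesis by simp
next
  case False
  with assms have neg: "0 < - l b" by simp
  have "l a = - l b * (pivot_rest b l a - (if a = b then 1 else 0))" for a
    using assms by (simp add: pivot_rest_def)
  from scale_iff[OF neg this] False show ?thesis by simp
qed

lemma cut_realisable:
  fixes v :: "('a \<Rightarrow> real) \<Rightarrow> real"
  assumes "finite R" and order: "\<And>m m'. m \<in> R \<Longrightarrow> m' \<in> R \<Longrightarrow> C (\<lambda>a. m a - m' a) \<longleftrightarrow> v m' \<le> v m"
  shows "\<exists>t. \<forall>m\<in>R. (C (\<lambda>a. e a - m a) \<longleftrightarrow> v m \<le> t) \<and> (C (\<lambda>a. m a - e a) \<longleftrightarrow> t \<le> v m)"
proof (rule finite_cut_realisable[OF \<open>finite R\<close>])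
  show "C (\<lambda>a. e a - m a) \<or> C (\<lambda>a. m a - e a)" for m
    using total_pointwise[of "\<lambda>a. e a - m a" "\<lambda>a. m a - e a"] by auto
  show "C (\<lambda>a. e a - m' a)" if "m \<in> R" "m' \<in> R" "C (\<lambda>a. e a - m a)" "v m' \<le> v m" for m m'
    using add_pointwise[OF that(3) order[OF that(1,2), THEN iffD2, OF that(4)]] by simp
  show "C (\<lambda>a. m' a - e a)" if "m \<in> R" "m' \<in> R" "C (\<lambda>a. m a - e a)" "v m \<le> v m'" for m m'
    using add_pointwise[OF order[OF that(2,1), THEN iffD2, OF that(4)] that(3)] by simp
  show "v m \<le> v m'" if "m \<in> R" "m' \<in> R" "C (\<lambda>a. e a - m a)" "C (\<lambda>a. m' a - e a)" for m m'
    using add_pointwise[OF that(4) that(3), of "\<lambda>a. m' a - m a"] order[OF that(2,1)] by simp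
qed

text \<open>Induction on the support: forms not involving the new coordinate \<open>b\<close> and differences of
  the pivoted forms are realised by induction, and the value of \<open>b\<close> is then chosen as a cut.\<close>
lemma sign_pattern_realisable:
  assumes "finite S" "finite F" "\<forall>l\<in>F. \<forall>a. a \<notin> S \<longrightarrow> l a = 0"
  shows "\<exists>x :: 'a \<Rightarrow> real. \<forall>l\<in>F. C l \<longleftrightarrow> 0 \<le> lincomb S x l"
  using assms
proof (induction S arbitrary: F rule: finite_induct)
  case empty
  then have "l = (\<lambda>a. 0)" if "l \<in> F" for l using that by auto
  then show ?case using zero by (auto simp: lincomb_def)
next
  case (insert b S)
  define e :: "'a \<Rightarrow> real" where "e = (\<lambda>a. if a = b then 1 else 0)"
  define R where "R = pivoted b F"
  define G where "G = pivot_family b F"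
  have "finite G" "\<forall>l\<in>G. \<forall>a. a \<notin> S \<longrightarrow> l a = 0"
    using pivot_family[OF insert.prems] by (simp_all add: G_def)
  then have "\<exists>x :: 'a \<Rightarrow> real. \<forall>l\<in>G. C l \<longleftrightarrow> 0 \<le> lincomb S x l"
    by (rule insert.IH)
  then obtain x' :: "'a \<Rightarrow> real" where x': "\<forall>l\<in>G. C l \<longleftrightarrow> 0 \<le> lincomb S x' l"
    by blast
  define v where "v m = lincomb S x' m" for m
  have order: "C (\<lambda>a. m a - m' a) \<longleftrightarrow> v m' \<le> v m" if "m \<in> R" "m' \<in> R" for m m'
  proof -
    have "(\<lambda>a. m a - m' a) \<in> G" unfolding G_def pivot_family_def using that by (auto simp: R_def)
    then show ?thesis using x' by (simp add: v_def lincomb_diff)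
  qed
  have "finite R" using insert.prems(1) by (simp add: R_def pivoted_def)
  from cut_realisable[OF this order, of e] obtain t
    where t: "\<forall>m\<in>R. (C (\<lambda>a. e a - m a) \<longleftrightarrow> v m \<le> t) \<and> (C (\<lambda>a. m a - e a) \<longleftrightarrow> t \<le> v m)"
    by blast
  define x where "x = x'(b := t)"
  have lincomb_x: "lincomb (insert b S) x l = l b * t + lincomb S x' l" for l
  proof -
    have "lincomb S x l = lincomb S x' l"
      unfolding lincomb_def using insert.hyps(2) by (intro sum.cong) (auto simp: x_def)
    then show ?thesis using insert.hyps by (simp add: lincomb_def x_def)
  qed
  have "C l \<longleftrightarrow> 0 \<le> lincomb (insert b S) x l" if l: "l \<in> F" for l
  proof (cases "l b = 0")
    case True
    then have "l \<in> G" using l by (simp add: G_def pivot_family_def)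
    then show ?thesis using x' lincomb_x True by simp
  next
    case False
    have "lincomb S x' l = lincomb S x' (\<lambda>a. (- l b) * pivot_rest b l a)"
      using insert.hyps(2) False by (intro lincomb_cong) (auto simp: pivot_rest_def)
    also have "\<dots> = - l b * v (pivot_rest b l)" unfolding lincomb_scale v_def by simp
    finally have lb: "lincomb (insert b S) x l = l b * (t - v (pivot_rest b l))"
      using lincomb_x[of l] by (simp add: algebra_simps)
    have "pivot_rest b l \<in> R" using l False by (auto simp: R_def pivoted_def)
    then have "(C (\<lambda>a. e a - pivot_rest b l a) \<longleftrightarrow> v (pivot_rest b l) \<le> t)
        \<and> (C (\<lambda>a. pivot_rest b l a - e a) \<longleftrightarrow> t \<le> v (pivot_rest b l))"
      using t by blast
    then show ?thesis
      using pivot_iff[of l b, OF False] lb False by (simp add: e_def zero_le_mult_iff)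
  qed
  then show ?case by blast
qed

end

section \<open>Transfer of lattice identities from the reals\<close>

lemma (in prime_lattice_ideal) total_cone_nonneg_mod:
  "total_cone (\<lambda>l. nonneg_mod P (lincomb S \<phi> l))"
  by standard (simp_all add: lincomb_add lincomb_scale lincomb_minus nonneg_mod_add
      nonneg_mod_scaleR nonneg_mod_total)

theorem lterm_eval_eq_0_transfer:
  fixes \<phi> :: "'a \<Rightarrow> 'y::banach_lattice"
  assumes "\<And>x :: 'a \<Rightarrow> real. lterm_eval x u = 0"
  shows "lterm_eval \<phi> u = 0"
proof (rule ccontr)
  assume "lterm_eval \<phi> u \<noteq> 0"
  then obtain P where P: "prime_lattice_ideal P" and notin: "lterm_eval \<phi> u \<notin> P"
    using exists_prime_ideal_avoiding by blast
  interpret prime_lattice_ideal P by (fact P)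
  define S where "S = lterm_vars u"
  define ps where "ps = (\<lambda>l. nonneg_mod P (lincomb S \<phi> l))"
  define L where "L = linearise ps u"
  define F where "F = insert L (insert (\<lambda>a. - L a) (branch_forms ps u))"
  have "finite S" "finite F" by (simp_all add: S_def F_def finite_branch_forms)
  moreover have "\<forall>l\<in>F. \<forall>a. a \<notin> S \<longrightarrow> l a = 0"
    unfolding F_def L_def S_def using linearise_outside_vars branch_forms_outside_vars by auto
  ultimately obtain x :: "'a \<Rightarrow> real" where x: "\<forall>l\<in>F. ps l \<longleftrightarrow> 0 \<le> lincomb S x l"
    using total_cone.sign_pattern_realisable[OF total_cone_nonneg_mod] unfolding ps_def by blast
  have "lincomb S x L = 0"
    using lterm_eval_linearise_real[of S u ps x] x assms by (simp add: F_def S_def L_def)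
  then have "ps L" "ps (\<lambda>a. - L a)" using x by (simp_all add: F_def lincomb_minus)
  then have "lincomb S \<phi> L \<in> P"
    unfolding ps_def lincomb_minus by (rule nonneg_mod_antisym)
  moreover have "lterm_eval \<phi> u - lincomb S \<phi> L \<in> P"
    unfolding L_def by (rule lterm_eval_linearise_mod) (simp_all add: S_def ps_def)
  ultimately have "(lterm_eval \<phi> u - lincomb S \<phi> L) + lincomb S \<phi> L \<in> P"
    by (intro add_mem)
  with notin show False by (simp only: diff_add_cancel)
qed

lemma lterm_eval_eq_transfer:
  fixes \<phi> :: "'a \<Rightarrow> 'y::banach_lattice"
  assumes "\<And>x :: 'a \<Rightarrow> real. lterm_eval x s = lterm_eval x t"
  shows "lterm_eval \<phi> s = lterm_eval \<phi> t"
  using lterm_eval_eq_0_transfer[of "LAdd s (LScale (- 1) t)" \<phi>] assms by simp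

lemma lterm_eval_le_transfer:
  fixes \<phi> :: "'a \<Rightarrow> 'y::banach_lattice"
  assumes "\<And>x :: 'a \<Rightarrow> real. lterm_eval x s \<le> lterm_eval x t"
  shows "lterm_eval \<phi> s \<le> lterm_eval \<phi> t"
proof -
  have "lterm_eval \<phi> (LSup s t) = lterm_eval \<phi> t"
    by (rule lterm_eval_eq_transfer) (simp add: assms sup_absorb2)
  then show ?thesis by (simp add: le_iff_sup)
qed

section \<open>The greatest admissible seminorm\<close>

abbreviation lterm_fun :: "'a lterm \<Rightarrow> ('a \<Rightarrow> real) \<Rightarrow> real" where
  "lterm_fun t \<equiv> \<lambda>x. lterm_eval x t"

lemma lterm_fun_in_FVL: "lterm_fun t \<in> FVL"
proof (induction t)
  case (LVar a)
  show ?case using FVL.gen[of a] by (simp add: delta_def)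
next
  case (LSup s t)
  then show ?case using FVL.sup[OF LSup.IH] by (simp add: sup_max)
qed (auto intro: FVL.intros)

lemma FVL_imp_lterm_fun: "f \<in> FVL \<Longrightarrow> \<exists>t. f = lterm_fun t"
proof (induction rule: FVL.induct)
  case (gen a)
  show ?case by (rule exI[of _ "LVar a"]) (simp add: delta_def)
next
  case zero
  show ?case by (rule exI[of _ "LScale 0 (LVar undefined)"]) simp
next
  case (add f g)
  then show ?case by (metis lterm_eval.simps(2))
next
  case (scale f c)
  then show ?case by (metis lterm_eval.simps(3) real_scaleR_def)
next
  case (sup f g)
  then show ?case by (metis lterm_eval.simps(4) sup_max)
next
  case (inf f g)
  then obtain s t where "f = lterm_fun s" "g = lterm_fun t" by blast
  then have "(\<lambda>x. min (f x) (g x)) = lterm_fun (LScale (- 1) (LSup (LScale (- 1) s) (LScale (- 1) t)))"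
    by (simp add: inf_min)
  then show ?case by blast
qed

lemma FVL_abs:
  assumes "f \<in> FVL"
  shows "(\<lambda>x. \<bar>f x\<bar>) \<in> FVL"
proof -
  have "(\<lambda>x. max (f x) (- 1 * f x)) \<in> FVL" using assms by (intro FVL.sup FVL.scale)
  moreover have "(\<lambda>x. max (f x) (- 1 * f x)) = (\<lambda>x. \<bar>f x\<bar>)" by (simp add: fun_eq_iff max_def)
  ultimately show ?thesis by simp
qed

context
  fixes \<nu> assumes \<nu>: "\<nu> \<in> NN"
begin

lemma NN_add: "f \<in> FVL \<Longrightarrow> g \<in> FVL \<Longrightarrow> \<nu> (\<lambda>x. f x + g x) \<le> \<nu> f + \<nu> g"
  and NN_scale: "f \<in> FVL \<Longrightarrow> \<nu> (\<lambda>x. c * f x) = \<bar>c\<bar> * \<nu> f"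
  and NN_mono: "f \<in> FVL \<Longrightarrow> g \<in> FVL \<Longrightarrow> (\<And>x. \<bar>f x\<bar> \<le> \<bar>g x\<bar>) \<Longrightarrow> \<nu> f \<le> \<nu> g"
  and NN_delta: "\<nu> (delta a) \<le> 1"
  using \<nu> by (auto simp: NN_def lattice_seminorm_FVL_def)

lemma NN_zero: "\<nu> (\<lambda>x. 0) = 0"
  using NN_scale[OF FVL.gen[of undefined], of 0] by simp

lemma NN_abs: "f \<in> FVL \<Longrightarrow> \<nu> (\<lambda>x. \<bar>f x\<bar>) = \<nu> f"
  using NN_mono[of f "\<lambda>x. \<bar>f x\<bar>"] NN_mono[of "\<lambda>x. \<bar>f x\<bar>" f] FVL_abs[of f] by simp

lemma NN_max_le: "f \<in> FVL \<Longrightarrow> g \<in> FVL \<Longrightarrow> \<nu> (\<lambda>x. max (f x) (g x)) \<le> \<nu> f + \<nu> g"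
proof -
  assume f: "f \<in> FVL" and g: "g \<in> FVL"
  have "\<nu> (\<lambda>x. max (f x) (g x)) \<le> \<nu> (\<lambda>x. \<bar>f x\<bar> + \<bar>g x\<bar>)"
    by (rule NN_mono[OF FVL.sup[OF f g] FVL.add[OF FVL_abs[OF f] FVL_abs[OF g]]]) (simp add: max_def)
  also have "\<dots> \<le> \<nu> f + \<nu> g"
    using NN_add[OF FVL_abs[OF f] FVL_abs[OF g]] by (simp add: NN_abs f g)
  finally show ?thesis .
qed

end

lemma NN_bounded: "\<exists>C. \<forall>\<nu>\<in>NN. \<nu> (lterm_fun t) \<le> C"
proof (induction t)
  case (LVar a)
  have "\<nu> (\<lambda>x. x a) \<le> 1" if "\<nu> \<in> NN" for \<nu> using NN_delta[OF that, of a] by (simp add: delta_def)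
  then show ?case by auto
next
  case (LAdd s t)
  then obtain C D where "\<forall>\<nu>\<in>NN. \<nu> (lterm_fun s) \<le> C" "\<forall>\<nu>\<in>NN. \<nu> (lterm_fun t) \<le> D" by blast
  then show ?case
    using NN_add[OF _ lterm_fun_in_FVL lterm_fun_in_FVL]
    by (intro exI[of _ "C + D"]) (fastforce intro: order_trans)
next
  case (LScale c s)
  then obtain C where C: "\<forall>\<nu>\<in>NN. \<nu> (lterm_fun s) \<le> C" by blast
  have "\<nu> (lterm_fun (LScale c s)) \<le> \<bar>c\<bar> * C" if "\<nu> \<in> NN" for \<nu>
    using NN_scale[OF that lterm_fun_in_FVL, of c s] C that by (simp add: mult_left_mono)
  then show ?case by blast
next
  case (LSup s t)
  then obtain C D where "\<forall>\<nu>\<in>NN. \<nu> (lterm_fun s) \<le> C" "\<forall>\<nu>\<in>NN. \<nu> (lterm_fun t) \<le> D" by blast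
  then show ?case
    using NN_max_le[OF _ lterm_fun_in_FVL lterm_fun_in_FVL]
    by (intro exI[of _ "C + D"]) (fastforce simp: sup_max intro: order_trans)
qed

lemma bdd_above_NN: "f \<in> FVL \<Longrightarrow> bdd_above ((\<lambda>\<nu>. \<nu> f) ` NN)"
  using FVL_imp_lterm_fun NN_bounded by (fastforce simp: bdd_above_def)

lemma zero_in_NN: "(\<lambda>_. 0) \<in> NN"
  by (simp add: NN_def lattice_seminorm_FVL_def)

lemma NN_le_fbl_norm: "\<nu> \<in> NN \<Longrightarrow> f \<in> FVL \<Longrightarrow> \<nu> f \<le> fbl_norm f"
  unfolding fbl_norm_def by (rule cSUP_upper[OF _ bdd_above_NN])

lemma fbl_norm_least: "(\<And>\<nu>. \<nu> \<in> NN \<Longrightarrow> \<nu> f \<le> C) \<Longrightarrow> fbl_norm f \<le> C"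
  unfolding fbl_norm_def using zero_in_NN by (intro cSUP_least) auto

lemma fbl_norm_zero: "fbl_norm (\<lambda>x::'a \<Rightarrow> real. 0) = 0"
proof (rule antisym)
  show "fbl_norm (\<lambda>x::'a \<Rightarrow> real. 0) \<le> 0" by (rule fbl_norm_least) (simp add: NN_zero)
  show "0 \<le> fbl_norm (\<lambda>x::'a \<Rightarrow> real. 0)" using NN_le_fbl_norm[OF zero_in_NN FVL.zero] by simp
qed

lemma fbl_norm_scale: "f \<in> FVL \<Longrightarrow> fbl_norm (\<lambda>x. c * f x) = \<bar>c\<bar> * fbl_norm f"
proof (cases "c = 0")
  case False
  assume f: "f \<in> FVL"
  have le: "fbl_norm (\<lambda>x. d * g x) \<le> \<bar>d\<bar> * fbl_norm g" if "g \<in> FVL" for d g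
    using that by (intro fbl_norm_least) (simp add: NN_scale NN_le_fbl_norm mult_left_mono)
  have "fbl_norm f = fbl_norm (\<lambda>x. inverse c * (c * f x))" using False by (simp add: field_simps)
  also have "\<dots> \<le> \<bar>inverse c\<bar> * fbl_norm (\<lambda>x. c * f x)" by (rule le[OF FVL.scale[OF f]])
  finally have "\<bar>c\<bar> * fbl_norm f \<le> fbl_norm (\<lambda>x. c * f x)"
    using False by (simp add: field_simps abs_inverse)
  with le[OF f, of c] show ?thesis by simp
qed (simp add: fbl_norm_zero)

lemma fbl_norm_seminorm: "lattice_seminorm_FVL fbl_norm"
  unfolding lattice_seminorm_FVL_def
proof (intro conjI ballI allI impI)
  fix f g :: "('a \<Rightarrow> real) \<Rightarrow> real" assume f: "f \<in> FVL" and g: "g \<in> FVL"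
  show "fbl_norm (\<lambda>x. f x + g x) \<le> fbl_norm f + fbl_norm g"
  proof (rule fbl_norm_least)
    fix \<nu> :: "(('a \<Rightarrow> real) \<Rightarrow> real) \<Rightarrow> real" assume \<nu>: "\<nu> \<in> NN"
    have "\<nu> (\<lambda>x. f x + g x) \<le> \<nu> f + \<nu> g" by (rule NN_add[OF \<nu> f g])
    also have "\<dots> \<le> fbl_norm f + fbl_norm g"
      by (intro add_mono NN_le_fbl_norm[OF \<nu> f] NN_le_fbl_norm[OF \<nu> g])
    finally show "\<nu> (\<lambda>x. f x + g x) \<le> fbl_norm f + fbl_norm g" .
  qed
  show "fbl_norm f \<le> fbl_norm g" if "\<forall>x. \<bar>f x\<bar> \<le> \<bar>g x\<bar>"
  proof (rule fbl_norm_least)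
    fix \<nu> :: "(('a \<Rightarrow> real) \<Rightarrow> real) \<Rightarrow> real" assume \<nu>: "\<nu> \<in> NN"
    have "\<nu> f \<le> \<nu> g" using that by (intro NN_mono[OF \<nu> f g]) simp
    then show "\<nu> f \<le> fbl_norm g" using NN_le_fbl_norm[OF \<nu> g] by linarith
  qed
next
  show "fbl_norm (\<lambda>x. c * f x) = \<bar>c\<bar> * fbl_norm f" if "f \<in> FVL" for f and c :: real
    using that by (rule fbl_norm_scale)
qed

lemma fbl_norm_in_NN: "fbl_norm \<in> NN"
  unfolding NN_def using fbl_norm_seminorm by (auto intro!: fbl_norm_least simp: NN_delta)

lemma eval_in_NN: "(\<And>a. \<bar>y a\<bar> \<le> 1) \<Longrightarrow> (\<lambda>f. \<bar>f y\<bar>) \<in> NN"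
  unfolding NN_def lattice_seminorm_FVL_def by (auto simp: abs_mult delta_def)

lemma lterm_eval_cong: "(\<And>a. a \<in> lterm_vars t \<Longrightarrow> x a = y a) \<Longrightarrow> lterm_eval x t = lterm_eval y t"
  by (induction t) auto

lemma lterm_eval_scaleR: "0 \<le> c \<Longrightarrow> lterm_eval (\<lambda>a. c *\<^sub>R x a) t = c *\<^sub>R lterm_eval x t"
  by (induction t) (simp_all add: scaleR_add_right scaleR_sup)

text \<open>Definiteness: a nonzero \<open>f\<close> is nonzero at a point, which by positive homogeneity can be
  taken inside the unit cube, and evaluation there is an admissible seminorm.\<close>
lemma fbl_norm_eq_0_imp:
  assumes f: "f \<in> FVL" and "fbl_norm f = 0"
  shows "f = (\<lambda>x. 0)"
proof (rule ccontr)
  assume "f \<noteq> (\<lambda>x. 0)"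
  then obtain x0 where "f x0 \<noteq> 0" by auto
  obtain t where t: "f = lterm_fun t" using FVL_imp_lterm_fun[OF f] by blast
  define M where "M = 1 + (\<Sum>a\<in>lterm_vars t. \<bar>x0 a\<bar>)"
  have M: "1 \<le> M" unfolding M_def by (simp add: sum_nonneg)
  define y where "y a = (if a \<in> lterm_vars t then x0 a / M else 0)" for a
  have "\<bar>y a\<bar> \<le> 1" for a
  proof (cases "a \<in> lterm_vars t")
    case True
    then have "\<bar>x0 a\<bar> \<le> M"
      unfolding M_def using member_le_sum[of a "lterm_vars t" "\<lambda>a. \<bar>x0 a\<bar>"] by simp
    then show ?thesis using True M by (simp add: y_def abs_divide divide_le_eq_1)
  qed (simp add: y_def)
  then have "(\<lambda>g. \<bar>g y\<bar>) \<in> NN" by (rule eval_in_NN)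
  from NN_le_fbl_norm[OF this f] assms(2) have "f y = 0" by simp
  moreover have "f y = (1 / M) * f x0"
  proof -
    have "lterm_eval y t = lterm_eval (\<lambda>a. (1 / M) *\<^sub>R x0 a) t"
      by (rule lterm_eval_cong) (simp add: y_def)
    also have "\<dots> = (1 / M) *\<^sub>R lterm_eval x0 t" using M by (intro lterm_eval_scaleR) simp
    finally show ?thesis using t by simp
  qed
  ultimately show False using \<open>f x0 \<noteq> 0\<close> M by simp
qed

lemma fbl_norm_lattice_norm: "lattice_norm_FVL fbl_norm"
  unfolding lattice_norm_FVL_def using fbl_norm_seminorm fbl_norm_eq_0_imp by blast

section \<open>Extension to the completion\<close>

text \<open>By the transfer principle the value does not depend on the term chosen to represent \<open>f\<close>.\<close>
definition fvl_ext :: "('a \<Rightarrow> 'y::banach_lattice) \<Rightarrow> (('a \<Rightarrow> real) \<Rightarrow> real) \<Rightarrow> 'y" where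
  "fvl_ext \<phi> f = lterm_eval \<phi> (SOME t. f = lterm_fun t)"

lemma fvl_ext_lterm_fun: "fvl_ext \<phi> (lterm_fun t) = lterm_eval \<phi> t"
proof -
  define s where "s = (SOME s. lterm_fun t = lterm_fun s)"
  have eq: "lterm_fun t = lterm_fun s" unfolding s_def by (rule someI) (rule refl)
  have "lterm_eval \<phi> s = lterm_eval \<phi> t"
    by (rule lterm_eval_eq_transfer) (use eq in \<open>simp add: fun_eq_iff\<close>)
  then show ?thesis by (simp add: fvl_ext_def s_def)
qed

lemma fvl_ext_add:
  assumes "f \<in> FVL" "g \<in> FVL"
  shows "fvl_ext \<phi> (\<lambda>x. f x + g x) = fvl_ext \<phi> f + fvl_ext \<phi> g"
proof -
  obtain s t where st: "f = lterm_fun s" "g = lterm_fun t" using assms FVL_imp_lterm_fun by blast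
  then have "fvl_ext \<phi> (\<lambda>x. f x + g x) = fvl_ext \<phi> (lterm_fun (LAdd s t))" by simp
  also have "\<dots> = fvl_ext \<phi> f + fvl_ext \<phi> g" by (simp only: st fvl_ext_lterm_fun) simp
  finally show ?thesis .
qed

lemma fvl_ext_scale:
  assumes "f \<in> FVL"
  shows "fvl_ext \<phi> (\<lambda>x. c * f x) = c *\<^sub>R fvl_ext \<phi> f"
proof -
  obtain s where st: "f = lterm_fun s" using assms FVL_imp_lterm_fun by blast
  then have "fvl_ext \<phi> (\<lambda>x. c * f x) = fvl_ext \<phi> (lterm_fun (LScale c s))" by simp
  also have "\<dots> = c *\<^sub>R fvl_ext \<phi> f" by (simp only: st fvl_ext_lterm_fun) simp
  finally show ?thesis .
qed

lemma fvl_ext_max: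
  assumes "f \<in> FVL" "g \<in> FVL"
  shows "fvl_ext \<phi> (\<lambda>x. max (f x) (g x)) = sup (fvl_ext \<phi> f) (fvl_ext \<phi> g)"
proof -
  obtain s t where st: "f = lterm_fun s" "g = lterm_fun t" using assms FVL_imp_lterm_fun by blast
  then have "fvl_ext \<phi> (\<lambda>x. max (f x) (g x)) = fvl_ext \<phi> (lterm_fun (LSup s t))"
    by (simp add: sup_max)
  also have "\<dots> = sup (fvl_ext \<phi> f) (fvl_ext \<phi> g)" by (simp only: st fvl_ext_lterm_fun) simp
  finally show ?thesis .
qed

lemma fvl_ext_delta: "fvl_ext \<phi> (delta a) = \<phi> a"
  using fvl_ext_lterm_fun[of \<phi> "LVar a"] by (simp add: delta_def)

lemma lterm_eval_lat_abs: "lterm_eval \<phi> (LSup s (LScale (- 1) s)) = lat_abs (lterm_eval \<phi> s)"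
  by (simp add: lat_abs_def)

lemma lat_abs_real: "lat_abs (r::real) = \<bar>r\<bar>"
  by (simp add: lat_abs_def sup_max)

lemma norm_fvl_ext_in_NN:
  assumes \<phi>: "\<And>a. norm (\<phi> a) \<le> 1"
  shows "(\<lambda>f. norm (fvl_ext \<phi> f)) \<in> NN"
  unfolding NN_def lattice_seminorm_FVL_def
proof (intro CollectI conjI ballI allI impI)
  fix f g :: "('a \<Rightarrow> real) \<Rightarrow> real" assume f: "f \<in> FVL" and g: "g \<in> FVL"
  show "norm (fvl_ext \<phi> (\<lambda>x. f x + g x)) \<le> norm (fvl_ext \<phi> f) + norm (fvl_ext \<phi> g)"
    unfolding fvl_ext_add[OF f g] by (rule norm_triangle_ineq)
  show "norm (fvl_ext \<phi> (\<lambda>x. c * f x)) = \<bar>c\<bar> * norm (fvl_ext \<phi> f)" for c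
    unfolding fvl_ext_scale[OF f] by simp
  assume le: "\<forall>x. \<bar>f x\<bar> \<le> \<bar>g x\<bar>"
  obtain s t where st: "f = lterm_fun s" "g = lterm_fun t" using f g FVL_imp_lterm_fun by blast
  have "lterm_eval \<phi> (LSup s (LScale (- 1) s)) \<le> lterm_eval \<phi> (LSup t (LScale (- 1) t))"
  proof (rule lterm_eval_le_transfer)
    show "lterm_eval x (LSup s (LScale (- 1) s)) \<le> lterm_eval x (LSup t (LScale (- 1) t))"
      for x :: "'a \<Rightarrow> real"
      unfolding lterm_eval_lat_abs lat_abs_real using le by (simp add: st)
  qed
  then show "norm (fvl_ext \<phi> f) \<le> norm (fvl_ext \<phi> g)"
    unfolding st fvl_ext_lterm_fun lterm_eval_lat_abs by (rule norm_le_if_lat_abs_le)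
next
  show "norm (fvl_ext \<phi> (delta a)) \<le> 1" for a by (simp add: fvl_ext_delta \<phi>)
qed

context
  fixes j :: "(('a \<Rightarrow> real) \<Rightarrow> real) \<Rightarrow> 'x::banach_lattice"
  assumes j: "is_completion_map j"
begin

lemma j_add: "f \<in> FVL \<Longrightarrow> g \<in> FVL \<Longrightarrow> j (\<lambda>x. f x + g x) = j f + j g"
  and j_scale: "f \<in> FVL \<Longrightarrow> j (\<lambda>x. c * f x) = c *\<^sub>R j f"
  and j_max: "f \<in> FVL \<Longrightarrow> g \<in> FVL \<Longrightarrow> j (\<lambda>x. max (f x) (g x)) = sup (j f) (j g)"
  and norm_j: "f \<in> FVL \<Longrightarrow> norm (j f) = fbl_norm f"
  and closure_j: "closure (j ` FVL) = UNIV"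
  using j by (auto simp: is_completion_map_def)

lemma eq_on_completion:
  fixes h1 h2 :: "'x \<Rightarrow> 'z::real_normed_vector"
  assumes "continuous_on UNIV h1" "continuous_on UNIV h2" "\<And>f. f \<in> FVL \<Longrightarrow> h1 (j f) = h2 (j f)"
  shows "h1 x = h2 x"
proof -
  have "closure (j ` FVL) \<subseteq> {x. h1 x = h2 x}"
    using assms by (intro closure_minimal closed_Collect_eq) auto
  then show ?thesis using closure_j by auto
qed

lemma eq_on_completion2:
  fixes h1 h2 :: "'x \<times> 'x \<Rightarrow> 'z::real_normed_vector"
  assumes "continuous_on UNIV h1" "continuous_on UNIV h2"
    and "\<And>f g. f \<in> FVL \<Longrightarrow> g \<in> FVL \<Longrightarrow> h1 (j f, j g) = h2 (j f, j g)"
  shows "h1 p = h2 p"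
proof -
  have "closure (j ` FVL \<times> j ` FVL) \<subseteq> {p. h1 p = h2 p}"
    using assms by (intro closure_minimal closed_Collect_eq) auto
  then show ?thesis using closure_j by (auto simp: closure_Times)
qed

lemma j_lterm_fun_hom:
  assumes T: "lattice_hom T"
  shows "T (j (lterm_fun t)) = lterm_eval (\<lambda>a. T (j (delta a))) t"
proof (induction t)
  case (LVar a)
  then show ?case by (simp add: delta_def)
next
  case (LAdd s t)
  with T show ?case by (simp add: j_add lterm_fun_in_FVL lattice_hom_def linear_add)
next
  case (LScale c s)
  with T show ?case by (simp add: j_scale lterm_fun_in_FVL lattice_hom_def linear_scale)
next
  case (LSup s t)
  have "j (lterm_fun (LSup s t)) = sup (j (lterm_fun s)) (j (lterm_fun t))"
    using j_max[OF lterm_fun_in_FVL lterm_fun_in_FVL, of s t] by (simp add: sup_max)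
  with LSup T show ?case by (simp add: lattice_hom_def)
qed

lemma norm_fvl_ext_diff_le:
  assumes \<phi>: "\<And>a. norm (\<phi> a) \<le> 1" and f: "f \<in> FVL" and g: "g \<in> FVL"
  shows "norm (fvl_ext \<phi> f - fvl_ext \<phi> g) \<le> norm (j f - j g)"
proof -
  define d where "d = (\<lambda>x. f x + - 1 * g x)"
  have d: "d \<in> FVL" unfolding d_def using f g by (intro FVL.add FVL.scale)
  have "fvl_ext \<phi> f - fvl_ext \<phi> g = fvl_ext \<phi> d"
    unfolding d_def fvl_ext_add[OF f FVL.scale[OF g]] fvl_ext_scale[OF g] by simp
  moreover have "j f - j g = j d"
    unfolding d_def j_add[OF f FVL.scale[OF g]] j_scale[OF g] by simp
  ultimately show ?thesis
    using NN_le_fbl_norm[OF norm_fvl_ext_in_NN[OF \<phi>] d] by (simp add: norm_j d)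
qed

end

context
  fixes j :: "(('a \<Rightarrow> real) \<Rightarrow> real) \<Rightarrow> 'x::banach_lattice"
  assumes j: "is_completion_map j"
begin

lemma fvl_ext_lipschitz_extension:
  fixes \<phi> :: "'a \<Rightarrow> 'y::banach_lattice"
  assumes \<phi>: "\<And>a. norm (\<phi> a) \<le> 1"
  obtains T where "1-lipschitz_on UNIV T" "\<And>f. f \<in> FVL \<Longrightarrow> T (j f) = fvl_ext \<phi> f"
proof -
  have lip: "norm (fvl_ext \<phi> f - fvl_ext \<phi> g) \<le> norm (j f - j g)" if "f \<in> FVL" "g \<in> FVL" for f g
    using norm_fvl_ext_diff_le[OF j, of \<phi>] \<phi> that by blast
  define T0 where "T0 z = fvl_ext \<phi> (inv_into FVL j z)" for z
  have T0: "T0 (j f) = fvl_ext \<phi> f" if f: "f \<in> FVL" for f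
  proof -
    let ?g = "inv_into FVL j (j f)"
    have "?g \<in> FVL" "j ?g = j f" using f by (simp_all add: inv_into_into f_inv_into_f)
    then have "norm (fvl_ext \<phi> ?g - fvl_ext \<phi> f) \<le> 0"
      using lip[of ?g f] f by simp
    then show ?thesis by (simp add: T0_def)
  qed
  have "1-lipschitz_on (j ` FVL) T0"
    by (rule lipschitz_onI) (auto simp: T0 dist_norm lip)
  then obtain T where "1-lipschitz_on (closure (j ` FVL)) T" "\<forall>z\<in>j ` FVL. T z = T0 z"
    using lipschitz_extend_closure by blast
  then show thesis using that closure_j[OF j] T0 by auto
qed

lemma lattice_hom_if_extends_fvl_ext:
  fixes \<phi> :: "'a \<Rightarrow> 'y::banach_lattice" and T :: "'x \<Rightarrow> 'y"
  assumes cont: "continuous_on UNIV T" and T: "\<And>f. f \<in> FVL \<Longrightarrow> T (j f) = fvl_ext \<phi> f"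
  shows "lattice_hom T"
proof -
  have cont2: "continuous_on UNIV (\<lambda>p. T (h p))" if "continuous_on UNIV h" for h :: "'x \<times> 'x \<Rightarrow> 'x"
    by (rule continuous_on_compose2[OF cont that]) simp
  have add: "T (fst p + snd p) = T (fst p) + T (snd p)" for p
  proof (rule eq_on_completion2[OF j, of "\<lambda>p. T (fst p + snd p)" "\<lambda>p. T (fst p) + T (snd p)"])
    show "continuous_on UNIV (\<lambda>p. T (fst p + snd p))" "continuous_on UNIV (\<lambda>p. T (fst p) + T (snd p))"
      by (intro cont2 continuous_intros)+
    fix f g :: "('a \<Rightarrow> real) \<Rightarrow> real" assume f: "f \<in> FVL" and g: "g \<in> FVL"
    have "T (j f + j g) = T (j (\<lambda>x. f x + g x))" by (simp add: j_add[OF j f g])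
    also have "\<dots> = T (j f) + T (j g)" by (simp add: T f g FVL.add fvl_ext_add)
    finally show "T (fst (j f, j g) + snd (j f, j g)) = T (fst (j f, j g)) + T (snd (j f, j g))"
      by simp
  qed
  have scale: "T (c *\<^sub>R x) = c *\<^sub>R T x" for c x
  proof (rule eq_on_completion[OF j, of "\<lambda>x. T (c *\<^sub>R x)" "\<lambda>x. c *\<^sub>R T x"])
    show "continuous_on UNIV (\<lambda>x. T (c *\<^sub>R x))"
      by (rule continuous_on_compose2[OF cont]) (auto intro: continuous_intros)
    show "continuous_on UNIV (\<lambda>x. c *\<^sub>R T x)" by (intro cont continuous_intros)
    fix f :: "('a \<Rightarrow> real) \<Rightarrow> real" assume f: "f \<in> FVL"
    have "T (c *\<^sub>R j f) = T (j (\<lambda>x. c * f x))" by (simp add: j_scale[OF j f])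
    also have "\<dots> = c *\<^sub>R T (j f)" by (simp add: T f FVL.scale fvl_ext_scale)
    finally show "T (c *\<^sub>R j f) = c *\<^sub>R T (j f)" .
  qed
  have sup: "T (sup (fst p) (snd p)) = sup (T (fst p)) (T (snd p))" for p
  proof (rule eq_on_completion2[OF j, of "\<lambda>p. T (sup (fst p) (snd p))" "\<lambda>p. sup (T (fst p)) (T (snd p))"])
    show "continuous_on UNIV (\<lambda>p. T (sup (fst p) (snd p)))"
      "continuous_on UNIV (\<lambda>p. sup (T (fst p)) (T (snd p)))"
      by (intro cont2 continuous_intros)+
    fix f g :: "('a \<Rightarrow> real) \<Rightarrow> real" assume f: "f \<in> FVL" and g: "g \<in> FVL"
    have "T (sup (j f) (j g)) = T (j (\<lambda>x. max (f x) (g x)))" by (simp add: j_max[OF j f g])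
    also have "\<dots> = sup (T (j f)) (T (j g))" by (simp add: T f g FVL.sup fvl_ext_max)
    finally show "T (sup (fst (j f, j g)) (snd (j f, j g))) = sup (T (fst (j f, j g))) (T (snd (j f, j g)))"
      by simp
  qed
  have "linear T" using add[of "(x, y)" for x y] scale by (auto intro: linearI)
  then show "lattice_hom T" unfolding lattice_hom_def using sup[of "(x, y)" for x y] by simp
qed

lemma free_extension_exists:
  fixes \<phi> :: "'a \<Rightarrow> 'y::banach_lattice"
  assumes \<phi>: "\<forall>a. norm (\<phi> a) \<le> 1"
  shows "\<exists>T :: 'x \<Rightarrow> 'y. lattice_hom T \<and> (\<forall>x. norm (T x) \<le> norm x) \<and> (\<forall>a. T (j (delta a)) = \<phi> a)"
proof -
  obtain T where T: "1-lipschitz_on UNIV T" "\<And>f. f \<in> FVL \<Longrightarrow> T (j f) = fvl_ext \<phi> f"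
    using fvl_ext_lipschitz_extension[of \<phi>] \<phi> by blast
  have hom: "lattice_hom T"
    by (rule lattice_hom_if_extends_fvl_ext[OF lipschitz_on_continuous_on[OF T(1)] T(2)])
  then have "T 0 = 0" by (simp add: lattice_hom_def linear_0)
  then have "norm (T x) \<le> norm x" for x using lipschitz_on_normD[OF T(1), of x 0] by simp
  moreover have "T (j (delta a)) = \<phi> a" for a by (simp add: T(2) FVL.gen fvl_ext_delta)
  ultimately show ?thesis using hom by blast
qed

lemma free_extension_unique:
  fixes T1 T2 :: "'x \<Rightarrow> 'y::banach_lattice"
  assumes "lattice_hom T1" "\<And>x. norm (T1 x) \<le> norm x"
    and "lattice_hom T2" "\<And>x. norm (T2 x) \<le> norm x"
    and "\<And>a. T1 (j (delta a)) = T2 (j (delta a))"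
  shows "T1 = T2"
proof
  have cont: "continuous_on UNIV T" if "lattice_hom T" "\<And>x. norm (T x) \<le> norm x" for T :: "'x \<Rightarrow> 'y"
  proof -
    have "linear T" using that(1) by (simp add: lattice_hom_def)
    then have "bounded_linear T"
      using that(2) by (intro bounded_linear_intro[where K = 1]) (simp_all add: linear_add linear_scale)
    then show ?thesis by (rule linear_continuous_on)
  qed
  fix x
  show "T1 x = T2 x"
  proof (rule eq_on_completion[OF j])
    show "continuous_on UNIV T1" "continuous_on UNIV T2" using cont assms by blast+
    fix f :: "('a \<Rightarrow> real) \<Rightarrow> real" assume "f \<in> FVL"
    then obtain t where "f = lterm_fun t" using FVL_imp_lterm_fun by blast
    moreover have "(\<lambda>a. T1 (j (delta a))) = (\<lambda>a. T2 (j (delta a)))" using assms(5) by simp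
    ultimately show "T1 (j f) = T2 (j f)"
      using j_lterm_fun_hom[OF j assms(1), of t] j_lterm_fun_hom[OF j assms(3), of t] by simp
  qed
qed

end

theorem mainTheorem1:
  fixes j :: "(('a \<Rightarrow> real) \<Rightarrow> real) \<Rightarrow> 'x::banach_lattice"
  shows "(\<forall>f\<in>FVL. bdd_above ((\<lambda>\<nu>. \<nu> f) ` (NN :: ((('a \<Rightarrow> real) \<Rightarrow> real) \<Rightarrow> real) set)))
       \<and> lattice_norm_FVL (fbl_norm :: (('a \<Rightarrow> real) \<Rightarrow> real) \<Rightarrow> real)
       \<and> (fbl_norm :: (('a \<Rightarrow> real) \<Rightarrow> real) \<Rightarrow> real) \<in> NN
       \<and> (\<forall>\<nu>\<in>NN. \<forall>f\<in>FVL. \<nu> f \<le> fbl_norm (f :: ('a \<Rightarrow> real) \<Rightarrow> real))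
       \<and> (is_completion_map j \<longrightarrow>
           (\<forall>\<phi> :: 'a \<Rightarrow> 'y::banach_lattice. (\<forall>a. norm (\<phi> a) \<le> 1) \<longrightarrow>
              (\<exists>!T :: 'x \<Rightarrow> 'y. lattice_hom T \<and> (\<forall>x. norm (T x) \<le> norm x)
                   \<and> (\<forall>a. T (j (delta a)) = \<phi> a))))"
proof (intro conjI ballI impI allI)
  show "bdd_above ((\<lambda>\<nu>. \<nu> f) ` NN)" if "f \<in> FVL" for f :: "('a \<Rightarrow> real) \<Rightarrow> real"
    using that by (rule bdd_above_NN)
  show "\<nu> f \<le> fbl_norm f" if "\<nu> \<in> NN" "f \<in> FVL" for \<nu> and f :: "('a \<Rightarrow> real) \<Rightarrow> real"
    using that by (rule NN_le_fbl_norm)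
next
  fix \<phi> :: "'a \<Rightarrow> 'y::banach_lattice"
  assume j: "is_completion_map j" and \<phi>: "\<forall>a. norm (\<phi> a) \<le> 1"
  from free_extension_exists[OF j \<phi>] obtain T :: "'x \<Rightarrow> 'y"
    where T: "lattice_hom T \<and> (\<forall>x. norm (T x) \<le> norm x) \<and> (\<forall>a. T (j (delta a)) = \<phi> a)" ..
  show "\<exists>!T. lattice_hom T \<and> (\<forall>x. norm (T x) \<le> norm x) \<and> (\<forall>a. T (j (delta a)) = \<phi> a)"
  proof (rule ex1I[of _ T])
    fix T' assume T': "lattice_hom T' \<and> (\<forall>x. norm (T' x) \<le> norm x) \<and> (\<forall>a. T' (j (delta a)) = \<phi> a)"
    show "T' = T" by (rule free_extension_unique[OF j]) (use T T' in simp_all)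
  qed (fact T)
qed (fact fbl_norm_lattice_norm fbl_norm_in_NN)+

end
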